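(* Let $F$, $H$, $X$, $\Omega$, $Q$ and the sequences generated by the IneIREG method be as described in the context. Suppose $\eta_k\equiv\eta>0$ for all $k\ge0$; $\alpha_0\in[0,1]$ and $(\alpha_k)_{k\ge0}$ is nonincreasing; $\lambda_k\in[\underline\lambda,\overline\lambda]$ for all $k\ge0$ with $0<\underline\lambda\le\overline\lambda\le1/(L_F+\eta L_H)$; and $\hat s:=\sum_{k=0}^\infty\delta_k<+\infty$. For $k\ge1$ let $\Lambda_k=\sum_{j=0}^{k-1}\lambda_j$ and $\overline y_k=\Lambda_k^{-1}\sum_{j=0}^{k-1}\lambda_jy_j$. Then: (a) for all $k\ge1$, $-B_H\,\mathrm{dist}(\overline y_k,Q)\le\mathrm{Gap}(\overline y_k,H,Q)\le \frac1k\Big(\frac{D_X^2+\hat s}{2\underline\lambda\eta}\Big)$; (b) for all $k\ge1$, $0\le\mathrm{Gap}(\overline y_k,F,X)\le\frac1k\Big(\frac{D_X^2+\hat s}{2\underline\lambda}\Big)+\eta\Big(\frac{\overline\lambda C_HD_X}{\underline\lambda}\Big)$; (c) if $Q$ is $\sigma$-weakly sharp of order $\mathcal M\ge1$, then for all $k\ge1$, $\mathrm{Gap}(\overline y_k,H,Q)\ge-\frac{B_H}{\sigma^{1/\mathcal M}}\Big(\frac1k\Big(\frac{D_X^2+\hat s}{2\underline\lambda}\Big)+\eta\Big(\frac{\overline\lambda C_HD_X}{\underline\lambda}\Big)\Big)^{1/\mathcal M}$.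
   Context: Work in $\mathbb{R}^n$ with Euclidean inner product $\langle\cdot,\cdot\rangle$ and norm $\|\cdot\|$. The maps $F\colon \mathrm{Dom}\,F\to\mathbb{R}^n$ and $H\colon\mathrm{Dom}\,H\to\mathbb{R}^n$ are monotone and Lipschitz continuous with constants $L_F>0$ and $L_H>0$. $X$ is a nonempty compact convex set and $\Omega$ a nonempty closed convex set with $X\subset\Omega\subset\mathrm{Dom}\,F\cap\mathrm{Dom}\,H$; $P_X,P_\Omega$ denote orthogonal projections. $Q:=\{x\in X:\langle F(x),y-x\rangle\ge0\ \forall y\in X\}$ is assumed nonempty. $D_X:=\sup_{x,y\in X}\|x-y\|$, $C_H:=\sup_{x\in X}\|H(x)\|$, $B_H:=\sup_{x\in Q}\|H(x)\|$, $\mathrm{dist}(y,Q)$ is the Euclidean distance to $Q$. $\mathrm{Gap}(z,H,Q):=\sup_{x\in Q}\langle H(x),z-x\rangle$, $\mathrm{Gap}(z,F,X):=\sup_{x\in X}\langle F(x),z-x\rangle$. $Q$ is $\sigma$-weakly sharp of order $\mathcal M\ge1$ ($\sigma>0$) if $\langle F(x),y-x\rangle\ge\sigma\,\mathrm{dist}(y,Q)^{\mathcal M}$ for all $x\in Q$, $y\in X$. IneIREG method: start with $x_0=x_{-1}\in X$; for $k=0,1,\dots$, with parameters $\alpha_k\ge0$, $\lambda_k>0$, $\eta_k>0$, set $w_k=x_k+\alpha_k(x_k-x_{k-1})$, $w'_k=P_\Omega(w_k)$, $y_k=P_X\big(w_k-\lambda_k(F(w'_k)+\eta_kH(w'_k))\big)$,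 $x_{k+1}=P_X\big(w_k-\lambda_k(F(y_k)+\eta_kH(y_k))\big)$. Also $\delta_k:=\alpha_k(1+\alpha_k)\|x_k-x_{k-1}\|^2$ for $k\ge0$. *)

theory Defs
  imports "HOL-Analysis.Analysis"
begin

definition monotone_op :: "'a::real_inner set \<Rightarrow> ('a \<Rightarrow> 'a) \<Rightarrow> bool" where
  "monotone_op D F \<longleftrightarrow> (\<forall>x\<in>D. \<forall>y\<in>D. inner (F x - F y) (x - y) \<ge> 0)"

definition VI_sol :: "('a::real_inner \<Rightarrow> 'a) \<Rightarrow> 'a set \<Rightarrow> 'a set" where
  "VI_sol F X = {x \<in> X. \<forall>y\<in>X. inner (F x) (y - x) \<ge> 0}"

definition gap :: "'a::real_inner \<Rightarrow> ('a \<Rightarrow> 'a) \<Rightarrow> 'a set \<Rightarrow> real" where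
  "gap z G S = (SUP x\<in>S. inner (G x) (z - x))"

definition weakly_sharp :: "('a::real_inner \<Rightarrow> 'a) \<Rightarrow> 'a set \<Rightarrow> 'a set \<Rightarrow> real \<Rightarrow> real \<Rightarrow> bool" where
  "weakly_sharp F X Q \<sigma> M \<longleftrightarrow>
     (\<forall>x\<in>Q. \<forall>y\<in>X. inner (F x) (y - x) \<ge> \<sigma> * (infdist y Q) powr M)"

end

theory Submission
  imports Defs
begin

text \<open>Every iteration is an extragradient step for the regularized operator
  \<open>G = F + \<eta> H\<close>, which is monotone and \<open>(L\<^sub>F + \<eta> L\<^sub>H)\<close>-Lipschitz on \<open>\<Omega>\<close>. The two projection
  inequalities give \<open>\<parallel>x\<^sub>k\<^sub>+\<^sub>1 - u\<parallel>\<^sup>2 \<le> \<parallel>w\<^sub>k - u\<parallel>\<^sup>2 - 2 \<lambda>\<^sub>k \<langle>G y\<^sub>k, y\<^sub>k - u\<rangle>\<close> for every \<open>u \<in> X\<close>;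
  expanding \<open>\<parallel>w\<^sub>k - u\<parallel>\<^sup>2\<close> at the inertial point and telescoping (\<open>\<alpha>\<^sub>k\<close> is nonincreasing and
  \<open>\<alpha>\<^sub>0 \<le> 1\<close>) bounds the weighted regret \<open>2 \<Sum>\<^bsub>j<k\<^esub> \<lambda>\<^sub>j \<langle>G y\<^sub>j, y\<^sub>j - u\<rangle>\<close> by \<open>D\<^sub>X\<^sup>2 + s\<close>.
  For \<open>u \<in> Q\<close>, monotonicity of \<open>G\<close> and \<open>\<langle>F u, y\<^sub>j - u\<rangle> \<ge> 0\<close> leave \<open>\<eta> \<langle>H u, y\<^sub>j - u\<rangle>\<close> on the left,
  which bounds the gap of \<open>H\<close> on \<open>Q\<close> at the ergodic average; for \<open>u \<in> X\<close>, monotonicity of \<open>F\<close>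
  and \<open>\<parallel>H\<parallel> \<le> C\<^sub>H\<close> bound the gap of \<open>F\<close> on \<open>X\<close>. The ergodic average lies in \<open>X\<close>, which gives
  the lower bounds, and weak sharpness turns the bound on the gap of \<open>F\<close> into one on the
  distance from the average to \<open>Q\<close>.\<close>

lemma norm_inertial_combination:
  fixes a b :: "'a::real_inner"
  shows "(norm ((1 + t) *\<^sub>R a - t *\<^sub>R b))\<^sup>2
    = (1 + t) * (norm a)\<^sup>2 - t * (norm b)\<^sup>2 + t * (1 + t) * (norm (a - b))\<^sup>2"
  unfolding power2_norm_eq_inner inner_diff_left inner_diff_right inner_scaleR_left inner_scaleR_right
  by (simp add: inner_commute algebra_simps)

lemma scaled_inner_le_sum_squares:
  fixes a b c :: "'a::real_inner"
  assumes "0 \<le> l" "l * L \<le> 1" "norm a \<le> L * norm b"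
  shows "2 * l * inner a c \<le> (norm b)\<^sup>2 + (norm c)\<^sup>2"
proof -
  have "l * inner a c \<le> l * (norm a * norm c)"
    using assms(1) Cauchy_Schwarz_ineq2[of a c] by (meson abs_le_D1 mult_left_mono)
  also have "\<dots> \<le> l * ((L * norm b) * norm c)"
    using assms(1) mult_right_mono[OF assms(3) norm_ge_zero[of c]] by (simp add: mult_left_mono)
  also have "\<dots> = (l * L) * (norm b * norm c)"
    by (simp add: mult.assoc)
  also have "\<dots> \<le> norm b * norm c"
    using mult_right_mono[OF assms(2), of "norm b * norm c"] by simp
  finally show ?thesis
    using sum_squares_bound[of "norm b" "norm c"] by (simp add: power2_eq_square)
qed

text \<open>The first two hypotheses characterise \<open>x'\<close> and \<open>y\<close> as the projections of \<open>w - l gy\<close> and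
  \<open>w - l gw\<close> onto a convex set containing \<open>u\<close> and \<open>x'\<close>; the third is what Lipschitz continuity
  provides.\<close>
lemma extragradient_projection_ineq:
  fixes w y x' u gy gw :: "'a::real_inner"
  assumes "inner (w - l *\<^sub>R gy - x') (u - x') \<le> 0"
    and "inner (w - l *\<^sub>R gw - y) (x' - y) \<le> 0"
    and "2 * l * inner (gy - gw) (y - x') \<le> (norm (y - w))\<^sup>2 + (norm (y - x'))\<^sup>2"
  shows "(norm (x' - u))\<^sup>2 \<le> (norm (w - u))\<^sup>2 - 2 * l * inner gy (y - u)"
  using assms
  unfolding power2_norm_eq_inner inner_diff_left inner_diff_right inner_scaleR_left inner_scaleR_right
  by (simp add: inner_commute right_diff_distrib)

lemma extragradient_step:
  fixes G :: "'a::{real_inner,heine_borel} \<Rightarrow> 'a" and w :: 'a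
  assumes X: "closed X" "convex X" "X \<noteq> {}" and \<Omega>: "closed \<Omega>" "convex \<Omega>" "X \<subseteq> \<Omega>"
    and lip: "L-lipschitz_on \<Omega> G" and l: "0 \<le> l" "l * L \<le> 1" and u: "u \<in> X"
    and y_def: "y = closest_point X (w - l *\<^sub>R G (closest_point \<Omega> w))"
    and x'_def: "x' = closest_point X (w - l *\<^sub>R G y)"
  shows "(norm (x' - u))\<^sup>2 \<le> (norm (w - u))\<^sup>2 - 2 * l * inner (G y) (y - u)"
proof (rule extragradient_projection_ineq)
  show "inner (w - l *\<^sub>R G y - x') (u - x') \<le> 0"
    unfolding x'_def by (rule closest_point_dot[OF X(2,1) u])
  show "inner (w - l *\<^sub>R G (closest_point \<Omega> w) - y) (x' - y) \<le> 0"
    unfolding y_def by (rule closest_point_dot[OF X(2,1)]) (simp add: x'_def closest_point_in_set X)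
  have y\<Omega>: "y \<in> \<Omega>"
    using X \<Omega>(3) closest_point_in_set unfolding y_def by blast
  have w\<Omega>: "closest_point \<Omega> w \<in> \<Omega>"
    using X \<Omega> by (intro closest_point_in_set) auto
  have "norm (y - closest_point \<Omega> w) \<le> norm (y - w)"
    using closest_point_lipschitz[OF \<Omega>(2,1), of y w] X \<Omega>(3)
    by (auto simp: closest_point_self[OF y\<Omega>] dist_norm)
  then have "norm (G y - G (closest_point \<Omega> w)) \<le> L * norm (y - w)"
    using lipschitz_on_normD[OF lip y\<Omega> w\<Omega>] lipschitz_on_nonneg[OF lip]
    by (meson mult_left_mono order_trans)
  then show "2 * l * inner (G y - G (closest_point \<Omega> w)) (y - x')
      \<le> (norm (y - w))\<^sup>2 + (norm (y - x'))\<^sup>2"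
    by (rule scaled_inner_le_sum_squares[OF l])
qed

text \<open>The telescoping invariant carries the extra term \<open>\<alpha> K (D - d (K - 1)) \<ge> 0\<close>, which cannot
  grow because \<open>\<alpha>\<close> is nonincreasing.\<close>
lemma inertial_descent_sum:
  fixes c d \<alpha> \<delta> :: "nat \<Rightarrow> real"
  assumes d: "\<And>k. 0 \<le> d k" "\<And>k. d k \<le> D"
    and \<alpha>: "\<And>k. 0 \<le> \<alpha> k" "\<alpha> 0 \<le> 1" "\<And>k. \<alpha> (Suc k) \<le> \<alpha> k"
    and rec: "\<And>k. d (Suc k) + c k \<le> (1 + \<alpha> k) * d k - \<alpha> k * d (k - 1) + \<delta> k"
  shows "(\<Sum>j<K. c j) \<le> D + (\<Sum>j<K. \<delta> j)"
proof -
  have inv: "(\<Sum>j<K. c j) + d K + \<alpha> K * (D - d (K - 1)) \<le> d 0 + \<alpha> 0 * (D - d 0) + (\<Sum>j<K. \<delta> j)"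
  proof (induction K)
    case (Suc K)
    have "0 \<le> (\<alpha> K - \<alpha> (Suc K)) * (D - d K)"
      using \<alpha>(3)[of K] d(2)[of K] by simp
    then show ?case
      using Suc.IH rec[of K] by (simp add: algebra_simps)
  qed simp
  have "d 0 + \<alpha> 0 * (D - d 0) \<le> D"
    using mult_left_mono[OF d(2)[of 0], of "1 - \<alpha> 0"] \<alpha>(2) by (simp add: algebra_simps)
  moreover have "0 \<le> \<alpha> K * (D - d (K - 1))"
    using \<alpha>(1)[of K] d(2)[of "K - 1"] by simp
  ultimately show ?thesis
    using inv d(1)[of K] by linarith
qed

text \<open>Truncated subtraction makes \<open>x (0 - 1) = x 0\<close>, the convention \<open>x\<^sub>-\<^sub>1 = x\<^sub>0\<close>.\<close>
lemma inertial_extragradient_regret: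
  fixes G :: "'a::{real_inner,heine_borel} \<Rightarrow> 'a" and x w y :: "nat \<Rightarrow> 'a"
  assumes X: "compact X" "convex X" and \<Omega>: "closed \<Omega>" "convex \<Omega>" "X \<subseteq> \<Omega>"
    and lip: "L-lipschitz_on \<Omega> G" and lam: "\<And>k. 0 \<le> lam k" "\<And>k. lam k * L \<le> 1"
    and \<alpha>: "\<And>k. 0 \<le> \<alpha> k" "\<alpha> 0 \<le> 1" "\<And>k. \<alpha> (Suc k) \<le> \<alpha> k"
    and x0: "x 0 \<in> X"
    and w: "\<And>k. w k = x k + \<alpha> k *\<^sub>R (x k - x (k - 1))"
    and y: "\<And>k. y k = closest_point X (w k - lam k *\<^sub>R G (closest_point \<Omega> (w k)))"
    and x: "\<And>k. x (Suc k) = closest_point X (w k - lam k *\<^sub>R G (y k))"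
    and u: "u \<in> X"
  shows "2 * (\<Sum>j<K. lam j * inner (G (y j)) (y j - u))
    \<le> (diameter X)\<^sup>2 + (\<Sum>j<K. \<alpha> j * (1 + \<alpha> j) * (norm (x j - x (j - 1)))\<^sup>2)"
proof -
  have X_closed: "closed X" and X_ne: "X \<noteq> {}"
    using X(1) x0 by (auto intro: compact_imp_closed)
  have xX: "x k \<in> X" for k
    by (cases k) (use x0 in \<open>simp_all add: x closest_point_in_set X_closed X_ne\<close>)
  have "(\<Sum>j<K. 2 * lam j * inner (G (y j)) (y j - u))
      \<le> (diameter X)\<^sup>2 + (\<Sum>j<K. \<alpha> j * (1 + \<alpha> j) * (norm (x j - x (j - 1)))\<^sup>2)"
  proof (rule inertial_descent_sum[where d = "\<lambda>k. (norm (x k - u))\<^sup>2"])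
    show "(norm (x k - u))\<^sup>2 \<le> (diameter X)\<^sup>2" for k
      using diameter_bounded_bound[OF compact_imp_bounded[OF X(1)] xX u]
      by (simp add: dist_norm power_mono)
    have "w k - u = (1 + \<alpha> k) *\<^sub>R (x k - u) - \<alpha> k *\<^sub>R (x (k - 1) - u)" for k
      by (simp add: w algebra_simps)
    then have "(norm (w k - u))\<^sup>2 = (1 + \<alpha> k) * (norm (x k - u))\<^sup>2 - \<alpha> k * (norm (x (k - 1) - u))\<^sup>2
        + \<alpha> k * (1 + \<alpha> k) * (norm (x k - x (k - 1)))\<^sup>2" for k
      by (simp add: norm_inertial_combination)
    then show "(norm (x (Suc k) - u))\<^sup>2 + 2 * lam k * inner (G (y k)) (y k - u)
        \<le> (1 + \<alpha> k) * (norm (x k - u))\<^sup>2 - \<alpha> k * (norm (x (k - 1) - u))\<^sup>2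
          + \<alpha> k * (1 + \<alpha> k) * (norm (x k - x (k - 1)))\<^sup>2" for k
      using extragradient_step[OF X_closed X(2) X_ne \<Omega> lip lam(1)[of k] lam(2)[of k] u y x] by simp
  qed (use \<alpha> in auto)
  then show ?thesis
    by (simp add: sum_distrib_left mult.assoc)
qed

lemma gap_le:
  assumes "S \<noteq> {}" "\<And>u. u \<in> S \<Longrightarrow> inner (G u) (z - u) \<le> c"
  shows "gap z G S \<le> c"
  unfolding gap_def using assms by (rule cSUP_least)

lemma inner_le_gap:
  fixes G :: "'a::real_inner \<Rightarrow> 'a"
  assumes "compact S" "continuous_on S G" "u \<in> S"
  shows "inner (G u) (z - u) \<le> gap z G S"
proof -
  have "compact ((\<lambda>u. inner (G u) (z - u)) ` S)"
    using assms(1,2) by (intro compact_continuous_image) (auto intro!: continuous_intros)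
  then show ?thesis
    unfolding gap_def using assms(3) by (intro cSUP_upper bounded_imp_bdd_above compact_imp_bounded)
qed

lemma gap_nonneg:
  fixes G :: "'a::real_inner \<Rightarrow> 'a"
  assumes "compact S" "continuous_on S G" "z \<in> S"
  shows "0 \<le> gap z G S"
  using inner_le_gap[OF assms, of z] by simp

lemma gap_ge_neg_infdist:
  fixes G :: "'a::{real_inner,heine_borel} \<Rightarrow> 'a"
  assumes "compact S" "S \<noteq> {}" "continuous_on S G" "\<And>u. u \<in> S \<Longrightarrow> norm (G u) \<le> B"
  shows "- B * infdist z S \<le> gap z G S"
proof -
  obtain p where p: "p \<in> S" "infdist z S = dist z p"
    using infdist_attains_inf[OF compact_imp_closed[OF assms(1)] assms(2)] by blast
  have "norm (G p) * norm (z - p) \<le> B * norm (z - p)"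
    using assms(4)[OF p(1)] by (simp add: mult_right_mono)
  then have "- B * infdist z S \<le> inner (G p) (z - p)"
    using Cauchy_Schwarz_ineq2[of "G p" "z - p"] p(2) by (simp add: dist_norm)
  also have "\<dots> \<le> gap z G S"
    by (rule inner_le_gap[OF assms(1,3) p(1)])
  finally show ?thesis .
qed

lemma norm_le_SUP_norm:
  fixes f :: "'a::topological_space \<Rightarrow> 'b::real_normed_vector"
  assumes "compact S" "continuous_on S f" "z \<in> S"
  shows "norm (f z) \<le> (SUP u\<in>S. norm (f u))"
proof -
  have "compact ((\<lambda>u. norm (f u)) ` S)"
    using assms(1,2) by (intro compact_continuous_image) (auto intro!: continuous_intros)
  then show ?thesis
    using assms(3) by (intro cSUP_upper bounded_imp_bdd_above compact_imp_bounded)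
qed

lemma VI_sol_subset: "VI_sol F X \<subseteq> X"
  by (auto simp: VI_sol_def)

lemma compact_VI_sol:
  fixes F :: "'a::real_inner \<Rightarrow> 'a"
  assumes "compact X" "continuous_on X F"
  shows "compact (VI_sol F X)"
proof -
  have "closed {z \<in> X. 0 \<le> inner (F z) (v - z)}" for v
    by (rule continuous_on_closed_Collect_le[OF _ _ compact_imp_closed[OF assms(1)]])
      (auto intro!: continuous_intros assms(2))
  then have "compact (X \<inter> (\<Inter>v\<in>X. {z \<in> X. 0 \<le> inner (F z) (v - z)}))"
    by (intro compact_Int_closed[OF assms(1)] closed_INT) simp
  also have "X \<inter> (\<Inter>v\<in>X. {z \<in> X. 0 \<le> inner (F z) (v - z)}) = VI_sol F X"
    by (auto simp: VI_sol_def)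
  finally show ?thesis .
qed

lemma infdist_le_of_weakly_sharp:
  fixes F :: "'a::real_inner \<Rightarrow> 'a"
  assumes ws: "weakly_sharp F X Q \<sigma> M" and \<sigma>: "0 < \<sigma>" and M: "0 < M"
    and Q: "Q \<noteq> {}" "Q \<subseteq> X" and X: "compact X" "continuous_on X F"
    and z: "z \<in> X" and gap: "gap z F X \<le> b"
  shows "infdist z Q \<le> b powr (1 / M) / \<sigma> powr (1 / M)"
proof -
  obtain q where q: "q \<in> Q"
    using Q(1) by blast
  have "\<sigma> * infdist z Q powr M \<le> inner (F q) (z - q)"
    using ws q z unfolding weakly_sharp_def by blast
  also have "\<dots> \<le> b"
    using inner_le_gap[OF X, of q z] q Q(2) gap by auto
  finally have "infdist z Q powr M \<le> b / \<sigma>"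
    using \<sigma> by (simp add: field_simps)
  then have "(infdist z Q powr M) powr (1 / M) \<le> (b / \<sigma>) powr (1 / M)"
    using M by (intro powr_mono2) auto
  then show ?thesis
    using M by (simp add: powr_powr powr_divide infdist_nonneg)
qed

lemma monotone_op_subset: "monotone_op D F \<Longrightarrow> E \<subseteq> D \<Longrightarrow> monotone_op E F"
  by (auto simp: monotone_op_def)

lemma monotone_op_add_scaleR:
  assumes "monotone_op D F" "monotone_op D H" "0 \<le> \<eta>"
  shows "monotone_op D (\<lambda>z. F z + \<eta> *\<^sub>R H z)"
  unfolding monotone_op_def
proof (intro ballI)
  fix a b assume "a \<in> D" "b \<in> D"
  then have "0 \<le> inner (F a - F b) (a - b)" "0 \<le> inner (H a - H b) (a - b)"
    using assms(1,2) unfolding monotone_op_def by blast+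
  moreover have "inner (F a + \<eta> *\<^sub>R H a - (F b + \<eta> *\<^sub>R H b)) (a - b)
      = inner (F a - F b) (a - b) + \<eta> * inner (H a - H b) (a - b)"
    by (simp add: inner_diff_left inner_add_left algebra_simps)
  ultimately show "0 \<le> inner (F a + \<eta> *\<^sub>R H a - (F b + \<eta> *\<^sub>R H b)) (a - b)"
    using assms(3) by simp
qed

lemma VI_sol_inner_le_regularized:
  assumes "monotone_op D (\<lambda>z. F z + \<eta> *\<^sub>R H z)" "X \<subseteq> D" "p \<in> VI_sol F X" "z \<in> X"
  shows "\<eta> * inner (H p) (z - p) \<le> inner (F z + \<eta> *\<^sub>R H z) (z - p)"
proof -
  have "0 \<le> inner (F p) (z - p)" and "p \<in> X"
    using assms(3,4) by (auto simp: VI_sol_def)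
  moreover have "inner (F p + \<eta> *\<^sub>R H p) (z - p) \<le> inner (F z + \<eta> *\<^sub>R H z) (z - p)"
    using assms(1,2,4) \<open>p \<in> X\<close> unfolding monotone_op_def
    by (metis (no_types, lifting) diff_ge_0_iff_ge inner_diff_left subsetD)
  ultimately show ?thesis
    by (simp add: inner_add_left)
qed

lemma monotone_inner_le_regularized:
  assumes "monotone_op D F" "u \<in> D" "z \<in> D" "0 \<le> \<eta>" "norm (H z) * norm (z - u) \<le> b"
  shows "inner (F u) (z - u) \<le> inner (F z + \<eta> *\<^sub>R H z) (z - u) + \<eta> * b"
proof -
  have "inner (F u) (z - u) \<le> inner (F z) (z - u)"
    using assms(1-3) unfolding monotone_op_def
    by (metis (no_types, lifting) diff_ge_0_iff_ge inner_diff_left)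
  moreover have "- inner (H z) (z - u) \<le> b"
    using Cauchy_Schwarz_ineq2[of "H z" "z - u"] assms(5) by linarith
  ultimately show ?thesis
    using mult_left_mono[OF _ assms(4)] by (fastforce simp: inner_add_left)
qed

definition ergodic_average :: "(nat \<Rightarrow> real) \<Rightarrow> (nat \<Rightarrow> 'a::real_vector) \<Rightarrow> nat \<Rightarrow> 'a" where
  "ergodic_average lam y k = (1 / (\<Sum>j<k. lam j)) *\<^sub>R (\<Sum>j<k. lam j *\<^sub>R y j)"

lemma ergodic_average_in_convex:
  assumes "convex S" "\<And>j. y j \<in> S" "\<And>j. 0 < lam j" "0 < k"
  shows "ergodic_average lam y k \<in> S"
proof -
  have "0 < (\<Sum>j<k. lam j)"
    using assms(3,4) by (intro sum_pos) auto
  then have "(\<Sum>j<k. (lam j / (\<Sum>i<k. lam i)) *\<^sub>R y j) \<in> S"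
    using assms(1-3)
    by (intro convex_sum) (auto simp: sum_divide_distrib[symmetric] less_imp_le)
  then show ?thesis
    by (simp add: ergodic_average_def scaleR_sum_right divide_inverse_commute)
qed

lemma inner_ergodic_average_diff:
  fixes y :: "nat \<Rightarrow> 'a::real_inner"
  assumes "(\<Sum>j<k. lam j) \<noteq> 0"
  shows "inner v (ergodic_average lam y k - u) = (\<Sum>j<k. lam j * inner v (y j - u)) / (\<Sum>j<k. lam j)"
  using assms
  by (simp add: ergodic_average_def inner_diff_right inner_sum_right sum_subtractf
      sum_distrib_right[symmetric] field_simps)

lemma gap_ergodic_average_le:
  fixes y :: "nat \<Rightarrow> 'a::real_inner"
  assumes S: "S \<noteq> {}" and K: "0 < K" and lam: "0 < lam_lo" "\<And>j. lam_lo \<le> lam j" and c: "0 \<le> c"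
    and bound: "\<And>u. u \<in> S \<Longrightarrow> (\<Sum>j<K. lam j * inner (A u) (y j - u)) \<le> c + (\<Sum>j<K. lam j) * e"
  shows "gap (ergodic_average lam y K) A S \<le> c / (real K * lam_lo) + e"
proof (rule gap_le[OF S])
  have Lam: "real K * lam_lo \<le> (\<Sum>j<K. lam j)"
    using sum_mono[of "{..<K}" "\<lambda>_. lam_lo" lam, OF lam(2)] by simp
  moreover have "0 < real K * lam_lo"
    using K lam(1) by simp
  ultimately have Lam_pos: "0 < (\<Sum>j<K. lam j)"
    by linarith
  fix u assume "u \<in> S"
  have "inner (A u) (ergodic_average lam y K - u) = (\<Sum>j<K. lam j * inner (A u) (y j - u)) / (\<Sum>j<K. lam j)"
    using Lam_pos by (intro inner_ergodic_average_diff) simp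
  also have "\<dots> \<le> (c + (\<Sum>j<K. lam j) * e) / (\<Sum>j<K. lam j)"
    using bound[OF \<open>u \<in> S\<close>] Lam_pos by (simp add: divide_right_mono)
  also have "\<dots> = c / (\<Sum>j<K. lam j) + e"
    using Lam_pos by (simp add: field_simps)
  also have "\<dots> \<le> c / (real K * lam_lo) + e"
    using Lam \<open>0 < real K * lam_lo\<close> c by (simp add: divide_left_mono)
  finally show "inner (A u) (ergodic_average lam y K - u) \<le> c / (real K * lam_lo) + e" .
qed

lemma gap_VI_sol_ergodic_average_le:
  assumes mono: "monotone_op X (\<lambda>z. F z + \<eta> *\<^sub>R H z)" and \<eta>: "0 < \<eta>" and y: "\<And>j. y j \<in> X"
    and lam: "0 < lam_lo" "\<And>j. lam_lo \<le> lam j" and K: "0 < K"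
    and Q: "VI_sol F X \<noteq> {}" and R: "0 \<le> R"
    and regret: "\<And>u. u \<in> X \<Longrightarrow> 2 * (\<Sum>j<K. lam j * inner (F (y j) + \<eta> *\<^sub>R H (y j)) (y j - u)) \<le> R"
  shows "gap (ergodic_average lam y K) H (VI_sol F X) \<le> (1 / real K) * (R / (2 * lam_lo * \<eta>))"
proof -
  have lam_nonneg: "0 \<le> lam j" for j
    using lam(1) lam(2)[of j] by linarith
  have "(\<Sum>j<K. lam j * inner (H p) (y j - p)) \<le> R / (2 * \<eta>) + (\<Sum>j<K. lam j) * 0"
    if p: "p \<in> VI_sol F X" for p
  proof -
    have "\<eta> * (\<Sum>j<K. lam j * inner (H p) (y j - p))
        \<le> (\<Sum>j<K. lam j * inner (F (y j) + \<eta> *\<^sub>R H (y j)) (y j - p))"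
      unfolding sum_distrib_left
      using VI_sol_inner_le_regularized[OF mono order_refl p y] lam_nonneg
      by (intro sum_mono) (metis mult.left_commute mult_left_mono)
    also have "\<dots> \<le> R / 2"
      using regret p VI_sol_subset by fastforce
    finally show ?thesis
      using \<eta> by (simp add: field_simps)
  qed
  then have "gap (ergodic_average lam y K) H (VI_sol F X) \<le> R / (2 * \<eta>) / (real K * lam_lo) + 0"
    using \<eta> R by (intro gap_ergodic_average_le[OF Q K lam]) auto
  then show ?thesis
    by (simp add: field_simps)
qed

lemma gap_ergodic_average_le_regularized:
  assumes mono: "monotone_op X F" and \<eta>: "0 \<le> \<eta>" and y: "\<And>j. y j \<in> X"
    and lam: "0 < lam_lo" "\<And>j. lam_lo \<le> lam j" and K: "0 < K" and R: "0 \<le> R"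
    and H: "\<And>z. z \<in> X \<Longrightarrow> norm (H z) \<le> C"
    and diam: "\<And>a b. a \<in> X \<Longrightarrow> b \<in> X \<Longrightarrow> norm (a - b) \<le> D"
    and regret: "\<And>u. u \<in> X \<Longrightarrow> 2 * (\<Sum>j<K. lam j * inner (F (y j) + \<eta> *\<^sub>R H (y j)) (y j - u)) \<le> R"
  shows "gap (ergodic_average lam y K) F X \<le> (1 / real K) * (R / (2 * lam_lo)) + \<eta> * (C * D)"
proof -
  have lam_nonneg: "0 \<le> lam j" for j
    using lam(1) lam(2)[of j] by linarith
  have "(\<Sum>j<K. lam j * inner (F u) (y j - u)) \<le> R / 2 + (\<Sum>j<K. lam j) * (\<eta> * (C * D))"
    if u: "u \<in> X" for u
  proof -
    have "lam j * inner (F u) (y j - u)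
        \<le> lam j * inner (F (y j) + \<eta> *\<^sub>R H (y j)) (y j - u) + lam j * (\<eta> * (C * D))" for j
    proof -
      have "norm (H (y j)) * norm (y j - u) \<le> C * D"
        using H[OF y] diam[OF y u] by (intro mult_mono) (auto intro: order_trans[OF norm_ge_zero])
      then show ?thesis
        using monotone_inner_le_regularized[OF mono u y \<eta>] lam_nonneg
        by (metis distrib_left mult_left_mono)
    qed
    then have "(\<Sum>j<K. lam j * inner (F u) (y j - u))
        \<le> (\<Sum>j<K. lam j * inner (F (y j) + \<eta> *\<^sub>R H (y j)) (y j - u) + lam j * (\<eta> * (C * D)))"
      by (rule sum_mono)
    also have "\<dots> \<le> R / 2 + (\<Sum>j<K. lam j) * (\<eta> * (C * D))"
      using regret[OF u] by (simp add: sum.distrib flip: sum_distrib_right)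
    finally show ?thesis .
  qed
  then have "gap (ergodic_average lam y K) F X \<le> R / 2 / (real K * lam_lo) + \<eta> * (C * D)"
    using y R by (intro gap_ergodic_average_le[OF _ K lam]) auto
  then show ?thesis
    by simp
qed

lemma gap_VI_sol_ge_of_weakly_sharp:
  fixes F H :: "'a::{real_inner,heine_borel} \<Rightarrow> 'a"
  assumes ws: "weakly_sharp F X (VI_sol F X) \<sigma> M" and \<sigma>: "0 < \<sigma>" and M: "0 < M"
    and X: "compact X" "continuous_on X F" "continuous_on X H" and Q: "VI_sol F X \<noteq> {}"
    and B: "\<And>u. u \<in> VI_sol F X \<Longrightarrow> norm (H u) \<le> B"
    and z: "z \<in> X" and gap: "gap z F X \<le> b"
  shows "- (B / \<sigma> powr (1 / M)) * b powr (1 / M) \<le> gap z H (VI_sol F X)"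
proof -
  have "0 \<le> B"
    using B Q by (meson all_not_in_conv norm_ge_zero order_trans)
  moreover have "infdist z (VI_sol F X) \<le> b powr (1 / M) / \<sigma> powr (1 / M)"
    by (rule infdist_le_of_weakly_sharp[OF ws \<sigma> M Q VI_sol_subset X(1,2) z gap])
  ultimately have "B * infdist z (VI_sol F X) \<le> B * (b powr (1 / M) / \<sigma> powr (1 / M))"
    by (rule mult_left_mono[rotated])
  then have "- (B / \<sigma> powr (1 / M)) * b powr (1 / M) \<le> - B * infdist z (VI_sol F X)"
    by simp
  also have "\<dots> \<le> gap z H (VI_sol F X)"
    using compact_VI_sol[OF X(1,2)] Q continuous_on_subset[OF X(3) VI_sol_subset] B
    by (rule gap_ge_neg_infdist)
  finally show ?thesis .
qed

theorem theorem3p12: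
  fixes F H :: "'a::euclidean_space \<Rightarrow> 'a"
    and DomF DomH X \<Omega> :: "'a set"
    and LF LH \<eta> lam_lo lam_hi \<sigma> M :: real
    and \<alpha> lam :: "nat \<Rightarrow> real"
    and x w w' y :: "nat \<Rightarrow> 'a"
  assumes monoF: "monotone_op DomF F" and monoH: "monotone_op DomH H"
    and LF_pos: "LF > 0" and LH_pos: "LH > 0"
    and lipF: "LF-lipschitz_on DomF F" and lipH: "LH-lipschitz_on DomH H"
    and X_ne: "X \<noteq> {}" and X_compact: "compact X" and X_convex: "convex X"
    and \<Omega>_closed: "closed \<Omega>" and \<Omega>_convex: "convex \<Omega>"
    and X_sub: "X \<subseteq> \<Omega>" and \<Omega>_sub: "\<Omega> \<subseteq> DomF \<inter> DomH"
    and Q_ne: "VI_sol F X \<noteq> {}"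
    and x0: "x 0 \<in> X"
    and w_def: "\<And>k. w k = x k + \<alpha> k *\<^sub>R (x k - (if k = 0 then x 0 else x (k - 1)))"
    and w'_def: "\<And>k. w' k = closest_point \<Omega> (w k)"
    and y_def: "\<And>k. y k = closest_point X (w k - lam k *\<^sub>R (F (w' k) + \<eta> *\<^sub>R H (w' k)))"
    and x_def: "\<And>k. x (Suc k) = closest_point X (w k - lam k *\<^sub>R (F (y k) + \<eta> *\<^sub>R H (y k)))"
    and \<eta>_pos: "\<eta> > 0"
    and \<alpha>_nonneg: "\<And>k. \<alpha> k \<ge> 0"
    and \<alpha>0: "\<alpha> 0 \<le> 1"
    and \<alpha>_noninc: "\<And>k. \<alpha> (Suc k) \<le> \<alpha> k"
    and lam_bounds: "\<And>k. lam_lo \<le> lam k \<and> lam k \<le> lam_hi"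
    and lam_lo_pos: "0 < lam_lo" and lam_le: "lam_lo \<le> lam_hi"
    and lam_hi_le: "lam_hi \<le> 1 / (LF + \<eta> * LH)"
    and \<delta>_summable: "summable (\<lambda>k. \<alpha> k * (1 + \<alpha> k) * (norm (x k - (if k = 0 then x 0 else x (k - 1))))\<^sup>2)"
  shows
    "let Q = VI_sol F X;
         \<delta> = (\<lambda>k. \<alpha> k * (1 + \<alpha> k) * (norm (x k - (if k = 0 then x 0 else x (k - 1))))\<^sup>2);
         s = (\<Sum>k. \<delta> k);
         DX = diameter X;
         CH = (SUP z\<in>X. norm (H z));
         BH = (SUP z\<in>Q. norm (H z));
         ybar = (\<lambda>k. (1 / (\<Sum>j<k. lam j)) *\<^sub>R (\<Sum>j<k. lam j *\<^sub>R y j))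
     in (\<forall>k\<ge>1. - BH * infdist (ybar k) Q \<le> gap (ybar k) H Q
                \<and> gap (ybar k) H Q \<le> (1 / real k) * ((DX\<^sup>2 + s) / (2 * lam_lo * \<eta>)))
      \<and> (\<forall>k\<ge>1. 0 \<le> gap (ybar k) F X
                \<and> gap (ybar k) F X \<le> (1 / real k) * ((DX\<^sup>2 + s) / (2 * lam_lo))
                                        + \<eta> * (lam_hi * CH * DX / lam_lo))
      \<and> ((\<sigma> > 0 \<and> M \<ge> 1 \<and> weakly_sharp F X Q \<sigma> M) \<longrightarrow>
           (\<forall>k\<ge>1. gap (ybar k) H Q \<ge>
              - (BH / \<sigma> powr (1 / M)) *
                ((1 / real k) * ((DX\<^sup>2 + s) / (2 * lam_lo)) + \<eta> * (lam_hi * CH * DX / lam_lo)) powr (1 / M)))"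
proof -
  have prev: "(if k = 0 then x 0 else x (k - 1)) = x (k - 1)" for k :: nat
    by simp
  have summable: "summable (\<lambda>k. \<alpha> k * (1 + \<alpha> k) * (norm (x k - x (k - 1)))\<^sup>2)"
    using \<delta>_summable unfolding prev .
  define s where "s = (\<Sum>k. \<alpha> k * (1 + \<alpha> k) * (norm (x k - x (k - 1)))\<^sup>2)"
  define CH where "CH = (SUP z\<in>X. norm (H z))"
  define BH where "BH = (SUP z\<in>VI_sol F X. norm (H z))"
  define UB where "UB k = (1 / real k) * (((diameter X)\<^sup>2 + s) / (2 * lam_lo))
    + \<eta> * (lam_hi * CH * diameter X / lam_lo)" for k :: nat
  have XD: "X \<subseteq> DomF" "X \<subseteq> DomH"
    using X_sub \<Omega>_sub by auto
  have contF: "continuous_on X F" and contH: "continuous_on X H"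
    using XD lipF lipH by (auto intro: lipschitz_on_continuous_on lipschitz_on_mono)
  have CH: "norm (H z) \<le> CH" if "z \<in> X" for z
    unfolding CH_def using X_compact contH that by (rule norm_le_SUP_norm)
  have BH: "norm (H z) \<le> BH" if "z \<in> VI_sol F X" for z
    unfolding BH_def
    using compact_VI_sol[OF X_compact contF] continuous_on_subset[OF contH VI_sol_subset] that
    by (rule norm_le_SUP_norm)
  have diam: "norm (a - b) \<le> diameter X" if "a \<in> X" "b \<in> X" for a b
    using diameter_bounded_bound[OF compact_imp_bounded[OF X_compact] that] by (simp add: dist_norm)
  have "0 \<le> s"
    unfolding s_def using summable \<alpha>_nonneg by (intro suminf_nonneg) auto
  then have DX_s_nonneg: "0 \<le> (diameter X)\<^sup>2 + s"
    by simp
  have lam_pos: "0 < lam k" for k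
    using lam_bounds[of k] lam_lo_pos by linarith
  have yX: "y k \<in> X" for k
    unfolding y_def using compact_imp_closed[OF X_compact] X_ne by (rule closest_point_in_set)
  have regret: "2 * (\<Sum>j<K. lam j * inner (F (y j) + \<eta> *\<^sub>R H (y j)) (y j - u)) \<le> (diameter X)\<^sup>2 + s"
    if "u \<in> X" for u K
  proof -
    have "(LF + \<eta> * LH)-lipschitz_on \<Omega> (\<lambda>z. F z + \<eta> *\<^sub>R H z)"
      using \<Omega>_sub \<eta>_pos
      by (intro lipschitz_on_add lipschitz_on_cmult_nonneg lipschitz_on_mono[OF lipF]
          lipschitz_on_mono[OF lipH]) auto
    moreover have "lam k * (LF + \<eta> * LH) \<le> 1" for k
    proof -
      have "lam k \<le> 1 / (LF + \<eta> * LH)"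
        using lam_bounds[of k] lam_hi_le by linarith
      moreover have "0 < LF + \<eta> * LH"
        using LF_pos LH_pos \<eta>_pos by (simp add: add_pos_pos)
      ultimately show ?thesis
        by (simp add: pos_le_divide_eq)
    qed
    moreover have "(\<Sum>j<K. \<alpha> j * (1 + \<alpha> j) * (norm (x j - x (j - 1)))\<^sup>2) \<le> s"
      unfolding s_def using summable \<alpha>_nonneg by (intro sum_le_suminf) auto
    ultimately show ?thesis
      using inertial_extragradient_regret[OF X_compact X_convex \<Omega>_closed \<Omega>_convex X_sub,
          of "LF + \<eta> * LH" "\<lambda>z. F z + \<eta> *\<^sub>R H z" lam \<alpha> x w y u K]
        lam_pos \<alpha>_nonneg \<alpha>0 \<alpha>_noninc x0 w_def y_def x_def that
      by (fastforce simp: prev w'_def less_imp_le)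
  qed
  have monoG: "monotone_op X (\<lambda>z. F z + \<eta> *\<^sub>R H z)"
    using monotone_op_subset[OF monoF XD(1)] monotone_op_subset[OF monoH XD(2)] \<eta>_pos
    by (simp add: monotone_op_add_scaleR)
  have avgX: "ergodic_average lam y k \<in> X" if "1 \<le> k" for k
    using that by (intro ergodic_average_in_convex[OF X_convex yX lam_pos]) simp
  have gapH_le: "gap (ergodic_average lam y k) H (VI_sol F X)
      \<le> (1 / real k) * (((diameter X)\<^sup>2 + s) / (2 * lam_lo * \<eta>))" if "1 \<le> k" for k
    using that lam_bounds
    by (intro gap_VI_sol_ergodic_average_le[OF monoG \<eta>_pos yX lam_lo_pos _ _ Q_ne DX_s_nonneg regret]) auto
  have gapF_le: "gap (ergodic_average lam y k) F X \<le> UB k" if "1 \<le> k" for k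
  proof -
    have "gap (ergodic_average lam y k) F X
        \<le> (1 / real k) * (((diameter X)\<^sup>2 + s) / (2 * lam_lo)) + \<eta> * (CH * diameter X)"
      using that lam_bounds \<eta>_pos CH diam
      by (intro gap_ergodic_average_le_regularized[OF monotone_op_subset[OF monoF XD(1)] _ yX
            lam_lo_pos _ _ DX_s_nonneg _ _ regret]) auto
    moreover have "CH * diameter X \<le> lam_hi * CH * diameter X / lam_lo"
      using mult_right_mono[OF lam_le, of "CH * diameter X"] lam_lo_pos diam[OF x0 x0]
        order_trans[OF norm_ge_zero CH[OF x0]]
      by (simp add: pos_le_divide_eq mult.commute mult.left_commute)
    then have "\<eta> * (CH * diameter X) \<le> \<eta> * (lam_hi * CH * diameter X / lam_lo)"
      using \<eta>_pos by (intro mult_left_mono) auto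
    ultimately show ?thesis
      unfolding UB_def by linarith
  qed
  have gapH_ge: "- BH * infdist (ergodic_average lam y k) (VI_sol F X)
      \<le> gap (ergodic_average lam y k) H (VI_sol F X)" for k
    using compact_VI_sol[OF X_compact contF] Q_ne continuous_on_subset[OF contH VI_sol_subset] BH
    by (rule gap_ge_neg_infdist)
  have gapF_ge: "0 \<le> gap (ergodic_average lam y k) F X" if "1 \<le> k" for k
    using X_compact contF avgX[OF that] by (rule gap_nonneg)
  have sharp: "- (BH / \<sigma> powr (1 / M)) * UB k powr (1 / M)
      \<le> gap (ergodic_average lam y k) H (VI_sol F X)"
    if "1 \<le> k" "0 < \<sigma>" "1 \<le> M" "weakly_sharp F X (VI_sol F X) \<sigma> M" for k
    using that
    by (intro gap_VI_sol_ge_of_weakly_sharp[OF _ _ _ X_compact contF contH Q_ne BH avgX gapF_le]) auto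
  show ?thesis
    unfolding Let_def prev s_def[symmetric] CH_def[symmetric] BH_def[symmetric]
      ergodic_average_def[symmetric] UB_def[symmetric]
    using gapH_le gapH_ge gapF_le gapF_ge sharp by blast
qed

end
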